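(* Assume $abcd\neq0$. If $\omega\notin\partial B$, then \[\mathcal{E}_M(\omega)=\frac{1}{|a|^2+|b|^2{\zeta'_M}^2}\left\{M|a|^2+\frac{|b|^2}{4(x^2-1)}\Big({\zeta'_{M+1}}^2-{\zeta'_{M-1}}^2-4M\Big)\right\},\qquad x=x(\omega)\] (here $4(x^2-1)=(\lambda_+-\lambda_-)^2$ where $\lambda_\pm$ are the roots of $\lambda^2-2x\lambda+1=0$). If $\omega_*\in\partial B$, then \[\mathcal{E}_M(\omega_* )=\frac{M}{3}\cdot\frac{3|a|^2+|b|^2+2|b|^2M^2}{|a|^2+|b|^2M^2},\] and $\mathcal{E}_M$, as a function of $\omega$ on the unit circle, is continuous at every $\omega_*\in\partial B$.
   Context: Setting: $M\ge1$, $C=\begin{bmatrix} a&b\\ c&d\end{bmatrix}$ a $2\times2$ unitary matrix, $\Delta=\det C$; $|L\rangle=(1,0)^\top$, $|R\rangle=(0,1)^\top$; $\Gamma_M=\{0,\dots,M-1\}$. $E_M$ is the linear map on $\ell^2(\Gamma_M;\mathbb{C}^2)$ with $(E_M\varphi)(x)=P\varphi(x+1)+Q\varphi(x-1)$, $\varphi(-1)=\varphi(M)=0$, $P=\begin{bmatrix} a&b\\0&0\end{bmatrix}$, $Q=\begin{bmatrix}0&0\\c&d\end{bmatrix}$. For $\xi\in\mathbb{R}$, $z=e^{-i\xi}$, let $\varphi$ be the unique solution of $(z-E_M)\varphi=\delta_0|R\rangle$. Fix a square root $\Delta^{1/2}$ and set $\omega=\Delta^{-1/2}z$ (on the unit circle);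 the energy is $\mathcal{E}_M(\omega)=\sum_{n=0}^{M-1}\|\varphi(n)\|^2_{\mathbb{C}^2}$. Put $x(\omega)=\frac{\omega+\omega^{-1}}{2|a|}$, $\zeta'_m=U_{m-1}(x(\omega))$ with $U_m$ the Chebyshev polynomials of the second kind ($U_{-1}=0$, $U_0=1$, $U_{m+1}(t)=2tU_m(t)-U_{m-1}(t)$), and $\partial B=\{\omega:|x(\omega)|=1\}$. *)

theory Defs
  imports "HOL-Analysis.Analysis"
begin

text \<open>Coin matrix C = [[a,b],[c,d]] is unitary: C^* C = I (entrywise).\<close>
definition unitary2 :: "complex \<Rightarrow> complex \<Rightarrow> complex \<Rightarrow> complex \<Rightarrow> bool" where
  "unitary2 a b c d \<longleftrightarrow>
     cnj a * a + cnj c * c = 1 \<and> cnj b * b + cnj d * d = 1 \<and> cnj a * b + cnj c * d = 0"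

text \<open>Elements of l2(Gamma_M; C^2) as functions on int (pairs = (L-component, R-component)),
  vanishing outside {0..M-1}; this encodes the boundary condition phi(-1) = phi(M) = 0.\<close>
definition lattice_fun :: "nat \<Rightarrow> (int \<Rightarrow> complex \<times> complex) \<Rightarrow> bool" where
  "lattice_fun M \<phi> \<longleftrightarrow> (\<forall>x. (x < 0 \<or> x \<ge> int M) \<longrightarrow> \<phi> x = (0, 0))"

definition Eop :: "nat \<Rightarrow> complex \<Rightarrow> complex \<Rightarrow> complex \<Rightarrow> complex
    \<Rightarrow> (int \<Rightarrow> complex \<times> complex) \<Rightarrow> int \<Rightarrow> complex \<times> complex" where
  "Eop M a b c d \<phi> x =
     (if 0 \<le> x \<and> x < int M
      then (a * fst (\<phi> (x + 1)) + b * snd (\<phi> (x + 1)),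
            c * fst (\<phi> (x - 1)) + d * snd (\<phi> (x - 1)))
      else (0, 0))"

definition is_sol :: "nat \<Rightarrow> complex \<Rightarrow> complex \<Rightarrow> complex \<Rightarrow> complex \<Rightarrow> complex
    \<Rightarrow> (int \<Rightarrow> complex \<times> complex) \<Rightarrow> bool" where
  "is_sol M a b c d z \<phi> \<longleftrightarrow> lattice_fun M \<phi> \<and>
     (\<forall>x \<in> {0..<int M}.
        z * fst (\<phi> x) - fst (Eop M a b c d \<phi> x) = 0 \<and>
        z * snd (\<phi> x) - snd (Eop M a b c d \<phi> x) = (if x = 0 then 1 else 0))"

definition energy :: "nat \<Rightarrow> complex \<Rightarrow> complex \<Rightarrow> complex \<Rightarrow> complex \<Rightarrow> complex \<Rightarrow> real" where
  "energy M a b c d z =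
     (let \<phi> = (THE \<phi>. is_sol M a b c d z \<phi>)
      in \<Sum>n\<in>{0..<int M}. (cmod (fst (\<phi> n)))\<^sup>2 + (cmod (snd (\<phi> n)))\<^sup>2)"

fun chebU :: "nat \<Rightarrow> complex \<Rightarrow> complex" where
  "chebU 0 t = 1"
| "chebU (Suc 0) t = 2 * t"
| "chebU (Suc (Suc n)) t = 2 * t * chebU (Suc n) t - chebU n t"

definition zetap :: "nat \<Rightarrow> complex \<Rightarrow> complex" where
  "zetap m t = (if m = 0 then 0 else chebU (m - 1) t)"

definition xw :: "complex \<Rightarrow> complex \<Rightarrow> complex" where
  "xw a \<omega> = (\<omega> + inverse \<omega>) / (2 * of_real (cmod a))"

definition dB :: "complex \<Rightarrow> complex set" where
  "dB a = {\<omega>. cmod (xw a \<omega>) = 1}"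

end

theory Submission
  imports Defs
begin

(* Read from the right end, where phi(M) = 0, the equation (z - E_M) phi = delta_0 |R> determines
   phi(M-1-k) up to a single scalar factor, and the transfer relations make the resulting vector
   explicit: up to a unimodular phase its entries are zeta'_k(x) and zeta'_(k+1)(x), with the real
   number x = x(omega). The forcing at the left end fixes the scalar, and summing the squared norms
   gives
     E_M = (M |a|^2 + |b|^2 sum_(k<M) (zeta'_(k+1)^2 + zeta'_k^2)) / (|a|^2 + |b|^2 zeta'_M^2).
   Off the boundary the Cassini identity zeta'_(k+1)^2 - 2 x zeta'_(k+1) zeta'_k + zeta'_k^2 = 1
   telescopes the sum; on the boundary x = +-1 and zeta'_k = (+-1)^(k+1) k. Continuity holds
   because the energy is a rational function of Re omega with positive denominator. *)

lemma norm_sq_sum_eq_1: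
  fixes u v :: complex
  assumes "cnj u * u + cnj v * v = 1"
  shows "(cmod u)\<^sup>2 + (cmod v)\<^sup>2 = 1"
proof -
  have "complex_of_real ((cmod u)\<^sup>2 + (cmod v)\<^sup>2) = cnj u * u + cnj v * v"
    by (simp only: of_real_add complex_norm_square mult.commute)
  then show ?thesis using assms by (metis of_real_eq_1_iff)
qed

lemma unitary2_det_form:
  assumes "unitary2 a b c d"
  defines "\<Delta> \<equiv> a * d - b * c"
  shows "d = \<Delta> * cnj a" and "c = - \<Delta> * cnj b"
    and "(cmod a)\<^sup>2 + (cmod b)\<^sup>2 = 1" and "cmod \<Delta> = 1"
proof -
  have col1: "cnj a * a + cnj c * c = 1" and col2: "cnj b * b + cnj d * d = 1"
    and orth: "cnj a * b + cnj c * d = 0"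
    using assms(1) by (auto simp: unitary2_def)
  have orth': "a * cnj b + c * cnj d = 0" using arg_cong[OF orth, of cnj] by simp
  show d: "d = \<Delta> * cnj a" unfolding \<Delta>_def using col1 orth by algebra
  show c: "c = - \<Delta> * cnj b" unfolding \<Delta>_def using col2 orth' by algebra
  have "\<Delta> \<noteq> 0"
  proof
    assume "\<Delta> = 0"
    then have "c = 0" "d = 0" using c d by simp_all
    then have "a \<noteq> 0" "b \<noteq> 0" "cnj a * b = 0" using col1 col2 orth by auto
    then show False by simp
  qed
  moreover have "\<Delta> = \<Delta> * (a * cnj a + b * cnj b)"
  proof -
    have "a * d - b * c = \<Delta> * (a * cnj a + b * cnj b)"
      by (subst c, subst d) (simp add: algebra_simps)
    then show ?thesis by (simp only: \<Delta>_def)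
  qed
  ultimately have "a * cnj a + b * cnj b = 1" by simp
  then show row: "(cmod a)\<^sup>2 + (cmod b)\<^sup>2 = 1"
    by (intro norm_sq_sum_eq_1) (simp add: mult.commute)
  have "(cmod a)\<^sup>2 + (cmod c)\<^sup>2 = 1" "(cmod b)\<^sup>2 + (cmod d)\<^sup>2 = 1"
    using col1 col2 by (simp_all add: norm_sq_sum_eq_1)
  then have "(1 + (cmod \<Delta>)\<^sup>2) * ((cmod a)\<^sup>2 + (cmod b)\<^sup>2) = 2"
    using c d by (simp add: norm_mult power_mult_distrib algebra_simps)
  then have "(cmod \<Delta>)\<^sup>2 = 1\<^sup>2" using row by simp
  then show "cmod \<Delta> = 1" by (rule power2_eq_imp_eq) auto
qed

fun zeta' :: "nat \<Rightarrow> 'a::comm_ring_1 \<Rightarrow> 'a" where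
  "zeta' 0 t = 0"
| "zeta' (Suc 0) t = 1"
| "zeta' (Suc (Suc n)) t = 2 * t * zeta' (Suc n) t - zeta' n t"

lemma chebU_eq_zeta': "chebU n t = zeta' (Suc n) t"
proof -
  have "chebU n t = zeta' (Suc n) t \<and> chebU (Suc n) t = zeta' (Suc (Suc n)) t"
    by (induction n) auto
  then show ?thesis ..
qed

lemma zetap_eq_zeta': "zetap n t = zeta' n t"
  by (cases n) (simp_all add: zetap_def chebU_eq_zeta')

lemma zeta'_of_real: "zeta' n (of_real t) = (of_real (zeta' n t) :: 'a::{real_algebra_1, comm_ring_1})"
  by (induction n t rule: zeta'.induct) simp_all

lemma continuous_on_zeta' [continuous_intros]:
  fixes f :: "_ \<Rightarrow> 'a::{real_normed_algebra_1, comm_ring_1}"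
  assumes "continuous_on S f"
  shows "continuous_on S (\<lambda>x. zeta' n (f x))"
proof -
  have "continuous_on S (\<lambda>x. zeta' n (f x)) \<and> continuous_on S (\<lambda>x. zeta' (Suc n) (f x))"
    by (induction n) (auto intro!: continuous_intros assms)
  then show ?thesis ..
qed

lemma zeta'_cassini:
  "(zeta' (Suc n) t)\<^sup>2 - 2 * t * zeta' (Suc n) t * zeta' n t + (zeta' n t)\<^sup>2 = 1"
  by (induction n) (simp_all add: algebra_simps power2_eq_square)

lemma zeta'_sum_squares:
  fixes t :: "'a::comm_ring_1"
  assumes "M \<ge> 1"
  shows "4 * (t\<^sup>2 - 1) * (\<Sum>n<M. (zeta' (Suc n) t)\<^sup>2 + (zeta' n t)\<^sup>2)
           = (zeta' (M + 1) t)\<^sup>2 - (zeta' (M - 1) t)\<^sup>2 - 4 * of_nat M"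
  using assms
proof (induction M rule: dec_induct)
  case base
  then show ?case by (simp add: algebra_simps power2_eq_square)
next
  case (step m)
  define u v S where "u = zeta' (Suc m) t" and "v = zeta' m t"
    and "S = (\<Sum>n<m. (zeta' (Suc n) t)\<^sup>2 + (zeta' n t)\<^sup>2)"
  have "zeta' (m - 1) t = 2 * t * v - u" using step.hyps by (cases m) (simp_all add: u_def v_def)
  then have IH: "4 * (t\<^sup>2 - 1) * S = u\<^sup>2 - (2 * t * v - u)\<^sup>2 - 4 * of_nat m"
    using step.IH by (simp add: u_def S_def)
  have cassini: "u\<^sup>2 - 2 * t * u * v + v\<^sup>2 = 1"
    using zeta'_cassini[of m t] by (simp add: u_def v_def)
  have "(2 * t * u - v)\<^sup>2 - v\<^sup>2 - u\<^sup>2 + (2 * t * v - u)\<^sup>2 - 4 - 4 * (t\<^sup>2 - 1) * (u\<^sup>2 + v\<^sup>2)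
      = 4 * ((u\<^sup>2 - 2 * t * u * v + v\<^sup>2) - 1)"
    by (simp add: algebra_simps power2_eq_square)
  also have "\<dots> = 0" by (simp add: cassini)
  finally have new_terms:
    "4 * (t\<^sup>2 - 1) * (u\<^sup>2 + v\<^sup>2) = (2 * t * u - v)\<^sup>2 - v\<^sup>2 - u\<^sup>2 + (2 * t * v - u)\<^sup>2 - 4"
    by (simp only: right_minus_eq)
  have "4 * (t\<^sup>2 - 1) * (S + (u\<^sup>2 + v\<^sup>2)) = 4 * (t\<^sup>2 - 1) * S + 4 * (t\<^sup>2 - 1) * (u\<^sup>2 + v\<^sup>2)"
    by (rule distrib_left)
  also have "\<dots> = (u\<^sup>2 - (2 * t * v - u)\<^sup>2 - 4 * of_nat m)
                  + ((2 * t * u - v)\<^sup>2 - v\<^sup>2 - u\<^sup>2 + (2 * t * v - u)\<^sup>2 - 4)"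
    by (simp only: IH new_terms)
  also have "\<dots> = (2 * t * u - v)\<^sup>2 - v\<^sup>2 - 4 * (of_nat m + 1)"
    by (simp add: algebra_simps)
  finally show ?case by (simp add: u_def v_def S_def)
qed

lemma zeta'_at_unit:
  fixes t :: "'a::comm_ring_1"
  assumes "t\<^sup>2 = 1"
  shows "zeta' n t = t ^ (n + 1) * of_nat n"
proof -
  have "zeta' n t = t ^ (n + 1) * of_nat n \<and> zeta' (Suc n) t = t ^ (n + 2) * of_nat (n + 1)"
  proof (induction n)
    case (Suc n)
    have tt: "t * (t * x) = x" for x
      using assms by (simp add: power2_eq_square mult.assoc[symmetric])
    obtain p where p: "t * t ^ n = p" by blast
    have IH: "zeta' n t = p * of_nat n" "zeta' (Suc n) t = t * p * of_nat (n + 1)"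
      using Suc.IH by (simp_all add: p)
    have "zeta' (Suc (Suc n)) t = p * of_nat (n + 2)"
      using IH by (simp add: algebra_simps tt)
    then show ?case using IH by (simp add: p tt)
  qed (use assms in \<open>simp add: power2_eq_square\<close>)
  then show ?thesis ..
qed

definition energy_profile :: "nat \<Rightarrow> real \<Rightarrow> real \<Rightarrow> real \<Rightarrow> real" where
  "energy_profile M \<alpha> \<beta> t =
     (real M * \<alpha>\<^sup>2 + \<beta>\<^sup>2 * (\<Sum>n<M. (zeta' (Suc n) t)\<^sup>2 + (zeta' n t)\<^sup>2))
     / (\<alpha>\<^sup>2 + \<beta>\<^sup>2 * (zeta' M t)\<^sup>2)"

lemma energy_profile_off_unit:
  assumes "M \<ge> 1" and "t\<^sup>2 \<noteq> 1"
  shows "energy_profile M \<alpha> \<beta> t = 1 / (\<alpha>\<^sup>2 + \<beta>\<^sup>2 * (zeta' M t)\<^sup>2) *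
           (real M * \<alpha>\<^sup>2 + \<beta>\<^sup>2 / (4 * (t\<^sup>2 - 1)) *
             ((zeta' (M + 1) t)\<^sup>2 - (zeta' (M - 1) t)\<^sup>2 - 4 * real M))"
proof -
  have "(\<Sum>n<M. (zeta' (Suc n) t)\<^sup>2 + (zeta' n t)\<^sup>2)
      = ((zeta' (M + 1) t)\<^sup>2 - (zeta' (M - 1) t)\<^sup>2 - 4 * real M) / (4 * (t\<^sup>2 - 1))"
    using zeta'_sum_squares[OF assms(1), of t] assms(2) by (simp add: eq_divide_eq mult.commute)
  then show ?thesis by (simp add: energy_profile_def)
qed

lemma sum_consecutive_squares:
  "(\<Sum>n<M. (real (Suc n))\<^sup>2 + (real n)\<^sup>2) = real M * (2 * (real M)\<^sup>2 + 1) / 3"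
  by (induction M) (simp_all add: field_simps power2_eq_square)

lemma energy_profile_at_unit:
  assumes "t\<^sup>2 = 1"
  shows "energy_profile M \<alpha> \<beta> t =
           real M / 3 * ((3 * \<alpha>\<^sup>2 + \<beta>\<^sup>2 + 2 * \<beta>\<^sup>2 * (real M)\<^sup>2) / (\<alpha>\<^sup>2 + \<beta>\<^sup>2 * (real M)\<^sup>2))"
proof -
  have zeta'_sq: "(zeta' n t)\<^sup>2 = (real n)\<^sup>2" for n
  proof -
    have "(t ^ (n + 1))\<^sup>2 = (t\<^sup>2) ^ (n + 1)" by (metis power_mult mult.commute)
    then show ?thesis using assms by (simp add: zeta'_at_unit power_mult_distrib)
  qed
  have "energy_profile M \<alpha> \<beta> t
      = (real M * \<alpha>\<^sup>2 + \<beta>\<^sup>2 * (real M * (2 * (real M)\<^sup>2 + 1) / 3)) / (\<alpha>\<^sup>2 + \<beta>\<^sup>2 * (real M)\<^sup>2)"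
    by (simp only: energy_profile_def zeta'_sq sum_consecutive_squares)
  also have "real M * \<alpha>\<^sup>2 + \<beta>\<^sup>2 * (real M * (2 * (real M)\<^sup>2 + 1) / 3)
      = real M / 3 * (3 * \<alpha>\<^sup>2 + \<beta>\<^sup>2 + 2 * \<beta>\<^sup>2 * (real M)\<^sup>2)"
    by (simp add: field_simps)
  finally show ?thesis by simp
qed

lemma continuous_on_energy_profile:
  assumes "\<alpha> \<noteq> 0"
  shows "continuous_on UNIV (energy_profile M \<alpha> \<beta>)"
proof -
  have "\<alpha>\<^sup>2 + \<beta>\<^sup>2 * (zeta' M t)\<^sup>2 > 0" for t
    using assms by (intro add_pos_nonneg) auto
  then show ?thesis
    unfolding energy_profile_def by (intro continuous_intros) (auto simp: less_le)
qed

lemma is_sol_iff: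
  "is_sol M a b c d z \<phi> \<longleftrightarrow> lattice_fun M \<phi> \<and>
     (\<forall>x \<in> {0..<int M}.
        z * fst (\<phi> x) = a * fst (\<phi> (x + 1)) + b * snd (\<phi> (x + 1)) \<and>
        z * snd (\<phi> x) = c * fst (\<phi> (x - 1)) + d * snd (\<phi> (x - 1)) + (if x = 0 then 1 else 0))"
  by (auto simp: is_sol_def Eop_def algebra_simps)

lemma is_solD:
  assumes "is_sol M a b c d z \<phi>"
  shows "x < 0 \<or> x \<ge> int M \<Longrightarrow> \<phi> x = (0, 0)"
    and "0 \<le> x \<Longrightarrow> x < int M \<Longrightarrow> z * fst (\<phi> x) = a * fst (\<phi> (x + 1)) + b * snd (\<phi> (x + 1))"
    and "0 \<le> x \<Longrightarrow> x < int M \<Longrightarrow>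
           z * snd (\<phi> x) = c * fst (\<phi> (x - 1)) + d * snd (\<phi> (x - 1)) + (if x = 0 then 1 else 0)"
  using assms unfolding is_sol_iff lattice_fun_def by auto

lemma nat_diff_eq_Suc: "(x :: int) < y \<Longrightarrow> nat (y - x) = Suc (nat (y - (x + 1)))"
  by simp

locale coin_walk =
  fixes M :: nat and a b c d s \<omega> :: complex
  assumes M_pos: "M \<ge> 1" and unitary: "unitary2 a b c d" and a_nz: "a \<noteq> 0"
    and s_sq: "s\<^sup>2 = a * d - b * c" and \<omega>_unit: "cmod \<omega> = 1"
begin

definition "\<alpha> = cmod a"
definition "\<beta> = cmod b"
definition "x\<omega> = Re \<omega> / \<alpha>"
definition "z = s * \<omega>"
definition "r = a / (s * of_real \<alpha>)"

abbreviation "U n \<equiv> zeta' n (complex_of_real x\<omega>)"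

(* phi(M-1-k) = kappa (psiL k, psiR k), with kappa fixed by the forcing at x = 0 *)
definition "\<psi>L n = r ^ n * U n * b * of_real \<alpha> / (a * \<omega>)"
definition "\<psi>R n = r ^ n * (U (Suc n) - of_real \<alpha> * cnj \<omega> * U n)"

lemma d_eq: "d = s\<^sup>2 * cnj a" and c_eq: "c = - (s\<^sup>2) * cnj b"
  and row_norm: "\<alpha>\<^sup>2 + \<beta>\<^sup>2 = 1"
  using unitary2_det_form[OF unitary] s_sq by (simp_all add: \<alpha>_def \<beta>_def)

lemma s_unit: "cmod s = 1"
proof -
  have "(cmod s)\<^sup>2 = 1\<^sup>2"
    using unitary2_det_form(4)[OF unitary] s_sq by (simp add: norm_power[symmetric])
  then show ?thesis by (rule power2_eq_imp_eq) auto
qed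

lemma \<alpha>_pos: "\<alpha> > 0"
  using a_nz by (simp add: \<alpha>_def)

lemma \<omega>_cnj: "\<omega> * cnj \<omega> = 1"
  using \<omega>_unit by (simp add: complex_norm_square[symmetric])

lemma \<omega>_nz: "\<omega> \<noteq> 0"
  using \<omega>_unit by auto

lemma z_nz: "z \<noteq> 0" and d_nz: "d \<noteq> 0"
  using s_unit \<omega>_unit a_nz by (auto simp: z_def d_eq)

lemma r_unit: "cmod r = 1"
  using s_unit \<alpha>_pos by (simp add: r_def norm_divide norm_mult \<alpha>_def)

lemma two_\<alpha>_x\<omega>: "2 * of_real \<alpha> * complex_of_real x\<omega> = \<omega> + cnj \<omega>"
  using \<alpha>_pos by (simp add: x\<omega>_def complex_add_cnj)

lemma \<psi>L_step: "z * \<psi>L (Suc n) = a * \<psi>L n + b * \<psi>R n"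
  using a_nz \<alpha>_pos s_unit \<omega>_cnj
  by (auto simp: z_def \<psi>L_def \<psi>R_def r_def field_simps)

lemma \<psi>R_step: "z * \<psi>R n = c * \<psi>L (Suc n) + d * \<psi>R (Suc n)"
proof -
  define A where "A = complex_of_real \<alpha>"
  have A_nz: "A \<noteq> 0" using \<alpha>_pos by (simp add: A_def)
  have aa: "cnj a * a = A\<^sup>2"
    by (simp add: A_def \<alpha>_def mult.commute flip: complex_norm_square of_real_power)
  have "cnj b * b = of_real (\<beta>\<^sup>2)" by (simp add: \<beta>_def mult.commute flip: complex_norm_square)
  also have "\<beta>\<^sup>2 = 1 - \<alpha>\<^sup>2" using row_norm by simp
  finally have bb: "cnj b * b = 1 - A\<^sup>2" by (simp add: A_def)
  have sr: "s * r * A = a" using A_nz s_unit by (auto simp: r_def A_def)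
  have inv\<omega>: "1 / \<omega> = cnj \<omega>" using \<omega>_nz \<omega>_cnj by (simp add: field_simps)
  have "c * \<psi>L (Suc n) = - (r ^ n * s * (1 - A\<^sup>2) * cnj \<omega> * U (Suc n))"
  proof -
    have "c * \<psi>L (Suc n) = - (r ^ n * s * (cnj b * b) * (1 / \<omega>) * U (Suc n) * ((s * r * A) / a))"
      by (simp add: c_eq \<psi>L_def A_def power2_eq_square mult_ac)
    then show ?thesis using a_nz by (simp add: sr inv\<omega> bb)
  qed
  moreover have "d * \<psi>R (Suc n) = r ^ n * s * A * (U (Suc (Suc n)) - A * cnj \<omega> * U (Suc n))"
  proof -
    have "d * \<psi>R (Suc n)
        = r ^ n * s * (cnj a * a) * (U (Suc (Suc n)) - A * cnj \<omega> * U (Suc n)) * ((s * r * A) / (a * A))"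
      using \<alpha>_pos by (simp add: d_eq \<psi>R_def A_def power2_eq_square mult_ac del: zeta'.simps)
    then show ?thesis using a_nz A_nz by (simp add: sr aa power2_eq_square)
  qed
  ultimately have "c * \<psi>L (Suc n) + d * \<psi>R (Suc n)
      = r ^ n * s * (A * U (Suc (Suc n)) - cnj \<omega> * U (Suc n))"
    by (simp add: algebra_simps power2_eq_square del: zeta'.simps)
  also have "\<dots> = r ^ n * s * ((2 * A * of_real x\<omega>) * U (Suc n) - A * U n - cnj \<omega> * U (Suc n))"
    by (simp add: algebra_simps)
  also have "\<dots> = r ^ n * s * (\<omega> * U (Suc n) - A * (\<omega> * cnj \<omega>) * U n)"
    unfolding two_\<alpha>_x\<omega>[folded A_def] \<omega>_cnj by (simp add: algebra_simps)
  also have "\<dots> = z * \<psi>R n"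
    by (simp add: z_def \<psi>R_def A_def algebra_simps)
  finally show ?thesis ..
qed

lemma norm_\<psi>L: "(cmod (\<psi>L n))\<^sup>2 = \<beta>\<^sup>2 * (zeta' n x\<omega>)\<^sup>2"
  using r_unit \<omega>_unit \<alpha>_pos a_nz
  by (simp add: \<psi>L_def zeta'_of_real norm_mult norm_divide norm_power \<alpha>_def \<beta>_def power_mult_distrib)

lemma norm_\<psi>R: "(cmod (\<psi>R n))\<^sup>2 = \<alpha>\<^sup>2 + \<beta>\<^sup>2 * (zeta' (Suc n) x\<omega>)\<^sup>2"
proof -
  define u v where "u = zeta' (Suc n) x\<omega>" and "v = zeta' n x\<omega>"
  have Re\<omega>: "Re \<omega> = \<alpha> * x\<omega>" using \<alpha>_pos by (simp add: x\<omega>_def)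
  have Im\<omega>: "(Im \<omega>)\<^sup>2 = 1 - (\<alpha> * x\<omega>)\<^sup>2"
    using \<omega>_unit cmod_power2[of \<omega>] Re\<omega> by simp
  have "cmod (\<psi>R n) = cmod (of_real u - of_real \<alpha> * cnj \<omega> * of_real v)"
    using r_unit by (simp add: \<psi>R_def u_def v_def zeta'_of_real norm_mult norm_power)
  then have "(cmod (\<psi>R n))\<^sup>2 = (u - \<alpha> * Re \<omega> * v)\<^sup>2 + \<alpha>\<^sup>2 * (Im \<omega>)\<^sup>2 * v\<^sup>2"
    by (simp only: cmod_power2) (simp add: power2_eq_square algebra_simps)
  also have "\<dots> = (1 - \<alpha>\<^sup>2) * u\<^sup>2 + \<alpha>\<^sup>2 * (u\<^sup>2 - 2 * x\<omega> * u * v + v\<^sup>2)"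
    unfolding Re\<omega> Im\<omega> by (simp add: algebra_simps power2_eq_square)
  also have "\<dots> = \<alpha>\<^sup>2 + (1 - \<alpha>\<^sup>2) * u\<^sup>2"
    using zeta'_cassini[of n x\<omega>] by (simp add: u_def v_def)
  finally show ?thesis using row_norm by (simp add: u_def)
qed

lemma \<psi>R_nz: "\<psi>R n \<noteq> 0"
proof
  assume "\<psi>R n = 0"
  then have "\<alpha>\<^sup>2 + \<beta>\<^sup>2 * (zeta' (Suc n) x\<omega>)\<^sup>2 = 0" using norm_\<psi>R[of n] by simp
  then show False using \<alpha>_pos by (simp add: add_nonneg_eq_0_iff)
qed

lemma \<psi>L_0: "\<psi>L 0 = 0" and \<psi>R_0: "\<psi>R 0 = 1"
  by (simp_all add: \<psi>L_def \<psi>R_def)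

definition "\<kappa> = 1 / (z * \<psi>R (M - 1))"

definition "\<phi> x = (if 0 \<le> x \<and> x < int M
   then (\<kappa> * \<psi>L (nat (int M - 1 - x)), \<kappa> * \<psi>R (nat (int M - 1 - x))) else (0, 0))"

lemma \<phi>_sol: "is_sol M a b c d z \<phi>"
  unfolding is_sol_iff
proof (intro conjI ballI)
  show "lattice_fun M \<phi>" by (auto simp: lattice_fun_def \<phi>_def)
next
  fix x assume x: "x \<in> {0..<int M}"
  define k where "k = nat (int M - 1 - x)"
  have \<phi>x: "\<phi> x = (\<kappa> * \<psi>L k, \<kappa> * \<psi>R k)" using x by (simp add: \<phi>_def k_def)
  show "z * fst (\<phi> x) = a * fst (\<phi> (x + 1)) + b * snd (\<phi> (x + 1))"
  proof (cases "x + 1 = int M")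
    case True
    then show ?thesis by (simp add: \<phi>x k_def \<phi>_def \<psi>L_0)
  next
    case False
    define j where "j = nat (int M - 1 - (x + 1))"
    have "k = Suc j" using x False by (simp add: k_def j_def nat_diff_eq_Suc)
    moreover have "\<phi> (x + 1) = (\<kappa> * \<psi>L j, \<kappa> * \<psi>R j)"
      using x False by (simp add: \<phi>_def j_def)
    ultimately show ?thesis
      using arg_cong[OF \<psi>L_step[of j], of "\<lambda>t. \<kappa> * t"] by (simp add: \<phi>x algebra_simps)
  qed
  show "z * snd (\<phi> x) = c * fst (\<phi> (x - 1)) + d * snd (\<phi> (x - 1)) + (if x = 0 then 1 else 0)"
  proof (cases "x = 0")
    case True
    then have "k = M - 1" using M_pos by (simp add: k_def)
    then have "z * snd (\<phi> x) = z * \<kappa> * \<psi>R (M - 1)" by (simp add: \<phi>x)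
    also have "\<dots> = 1" using z_nz \<psi>R_nz by (simp add: \<kappa>_def)
    finally have h1: "z * snd (\<phi> x) = 1" .
    have "\<phi> (x - 1) = (0, 0)" using True by (simp add: \<phi>_def)
    then have h0: "c * fst (\<phi> (x - 1)) + d * snd (\<phi> (x - 1)) = 0" by simp
    show ?thesis by (simp only: h1 h0 if_P[OF True] add_0_left)
  next
    case False
    then have "nat (int M - 1 - (x - 1)) = Suc k" using x by (simp add: k_def nat_diff_eq_Suc)
    then have "\<phi> (x - 1) = (\<kappa> * \<psi>L (Suc k), \<kappa> * \<psi>R (Suc k))"
      using x False by (simp add: \<phi>_def)
    then show ?thesis
      using False arg_cong[OF \<psi>R_step[of k], of "\<lambda>t. \<kappa> * t"] by (simp add: \<phi>x algebra_simps)
  qed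
qed

lemma sol_backward:
  assumes "is_sol M a b c d z \<psi>" and "k < M"
  shows "\<psi> (int M - 1 - int k) = (snd (\<psi> (int M - 1)) * \<psi>L k, snd (\<psi> (int M - 1)) * \<psi>R k)"
  using assms(2)
proof (induction k)
  case 0
  have "z * fst (\<psi> (int M - 1)) = 0"
    using is_solD(2)[OF assms(1), of "int M - 1"] is_solD(1)[OF assms(1), of "int M"] M_pos by simp
  then show ?case using z_nz by (simp add: \<psi>L_0 \<psi>R_0 prod_eq_iff)
next
  case (Suc k)
  define x where "x = int M - 1 - int (Suc k)"
  define \<mu> where "\<mu> = snd (\<psi> (int M - 1))"
  have x: "0 \<le> x" "x + 1 < int M" using Suc.prems by (auto simp: x_def)
  have IH: "\<psi> (x + 1) = (\<mu> * \<psi>L k, \<mu> * \<psi>R k)" using Suc by (simp add: x_def \<mu>_def algebra_simps)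
  have eq1: "z * fst (\<psi> x) = a * fst (\<psi> (x + 1)) + b * snd (\<psi> (x + 1))"
    and eq2: "z * snd (\<psi> (x + 1)) = c * fst (\<psi> x) + d * snd (\<psi> x)"
    using is_solD(2)[OF assms(1), of x] is_solD(3)[OF assms(1), of "x + 1"] x by simp_all
  have "z * fst (\<psi> x) = z * (\<mu> * \<psi>L (Suc k))"
    using eq1[unfolded IH] arg_cong[OF \<psi>L_step[of k], of "\<lambda>t. \<mu> * t"] by (simp add: algebra_simps)
  then have L: "fst (\<psi> x) = \<mu> * \<psi>L (Suc k)" using z_nz by simp
  have "d * snd (\<psi> x) = d * (\<mu> * \<psi>R (Suc k))"
    using eq2[unfolded IH L] arg_cong[OF \<psi>R_step[of k], of "\<lambda>t. \<mu> * t"] by (auto simp: algebra_simps)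
  then have "snd (\<psi> x) = \<mu> * \<psi>R (Suc k)" using d_nz by simp
  then show ?case using L by (simp add: x_def \<mu>_def prod_eq_iff)
qed

lemma sol_unique:
  assumes sol: "is_sol M a b c d z \<psi>"
  shows "\<psi> = \<phi>"
proof
  fix x
  define \<mu> where "\<mu> = snd (\<psi> (int M - 1))"
  have "\<psi> 0 = (\<mu> * \<psi>L (M - 1), \<mu> * \<psi>R (M - 1))"
    using sol_backward[OF sol, of "M - 1", folded \<mu>_def] M_pos by (simp add: of_nat_diff)
  moreover have "z * snd (\<psi> 0) = 1"
    using is_solD(3)[OF sol, of 0] is_solD(1)[OF sol, of "-1"] M_pos by simp
  ultimately have "\<mu> = \<kappa>" using z_nz \<psi>R_nz by (simp add: \<kappa>_def field_simps)
  show "\<psi> x = \<phi> x"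
  proof (cases "0 \<le> x \<and> x < int M")
    case True
    define k where "k = nat (int M - 1 - x)"
    have "\<phi> x = (\<kappa> * \<psi>L k, \<kappa> * \<psi>R k)" using True by (simp add: \<phi>_def k_def)
    moreover have "k < M" and "int M - 1 - int k = x" using True by (auto simp: k_def)
    ultimately show ?thesis
      using sol_backward[OF sol \<open>k < M\<close>, folded \<mu>_def] \<open>\<mu> = \<kappa>\<close> by simp
  next
    case False
    then show ?thesis using is_solD(1)[OF sol, of x] by (auto simp: \<phi>_def)
  qed
qed

lemma the_sol: "(THE \<psi>. is_sol M a b c d z \<psi>) = \<phi>"
  using \<phi>_sol sol_unique by (rule the_equality)

lemma energy_eq_energy_profile: "energy M a b c d z = energy_profile M \<alpha> \<beta> x\<omega>"
proof -
  define D where "D = \<alpha>\<^sup>2 + \<beta>\<^sup>2 * (zeta' M x\<omega>)\<^sup>2"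
  have "(cmod \<kappa>)\<^sup>2 = 1 / D"
    using z_nz M_pos norm_\<psi>R[of "M - 1"]
    by (simp add: \<kappa>_def D_def norm_divide norm_mult z_def s_unit \<omega>_unit power_divide)
  have "energy M a b c d z = (\<Sum>x\<in>{0..<int M}. (cmod (fst (\<phi> x)))\<^sup>2 + (cmod (snd (\<phi> x)))\<^sup>2)"
    by (simp add: energy_def the_sol Let_def)
  also have "\<dots> = (\<Sum>k<M. (cmod \<kappa>)\<^sup>2 * ((cmod (\<psi>L k))\<^sup>2 + (cmod (\<psi>R k))\<^sup>2))"
  proof (rule sum.reindex_bij_witness[where i = "\<lambda>k. int M - 1 - int k"
        and j = "\<lambda>x. nat (int M - 1 - x)"])
    fix x assume x: "x \<in> {0..<int M}"
    then show "int M - 1 - int (nat (int M - 1 - x)) = x" and "nat (int M - 1 - x) \<in> {..<M}" by auto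
    show "(cmod \<kappa>)\<^sup>2 * ((cmod (\<psi>L (nat (int M - 1 - x))))\<^sup>2 + (cmod (\<psi>R (nat (int M - 1 - x))))\<^sup>2)
        = (cmod (fst (\<phi> x)))\<^sup>2 + (cmod (snd (\<phi> x)))\<^sup>2"
      using x by (simp add: \<phi>_def norm_mult power_mult_distrib algebra_simps)
  qed auto
  also have "\<dots> = (\<Sum>k<M. (\<alpha>\<^sup>2 + \<beta>\<^sup>2 * ((zeta' (Suc k) x\<omega>)\<^sup>2 + (zeta' k x\<omega>)\<^sup>2)) / D)"
    using \<open>(cmod \<kappa>)\<^sup>2 = 1 / D\<close> by (simp add: norm_\<psi>L norm_\<psi>R algebra_simps add_divide_distrib)
  also have "\<dots> = energy_profile M \<alpha> \<beta> x\<omega>"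
    by (simp add: energy_profile_def D_def sum.distrib
        flip: sum_divide_distrib sum_distrib_left)
  finally show ?thesis .
qed

end

lemma xw_on_circle:
  assumes "cmod \<omega> = 1" and "a \<noteq> 0"
  shows "xw a \<omega> = of_real (Re \<omega> / cmod a)"
proof -
  have "inverse \<omega> = cnj \<omega>"
    using assms(1) by (simp add: inverse_eq_divide divide_conv_cnj)
  then show ?thesis using assms(2) by (simp add: xw_def complex_add_cnj field_simps)
qed

lemma dB_on_circle:
  assumes "cmod \<omega> = 1" and "a \<noteq> 0"
  shows "\<omega> \<in> dB a \<longleftrightarrow> (Re \<omega> / cmod a)\<^sup>2 = 1"
proof -
  have "\<omega> \<in> dB a \<longleftrightarrow> \<bar>Re \<omega> / cmod a\<bar> = 1"
    unfolding dB_def mem_Collect_eq xw_on_circle[OF assms] norm_of_real ..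
  then show ?thesis by (simp only: abs_square_eq_1)
qed

lemma energy_on_circle:
  assumes "M \<ge> 1" and "unitary2 a b c d" and "a \<noteq> 0" and "s\<^sup>2 = a * d - b * c" and "cmod \<omega> = 1"
  shows "energy M a b c d (s * \<omega>) = energy_profile M (cmod a) (cmod b) (Re \<omega> / cmod a)"
proof -
  interpret coin_walk M a b c d s \<omega> using assms by unfold_locales
  show ?thesis using energy_eq_energy_profile by (simp add: z_def \<alpha>_def \<beta>_def x\<omega>_def)
qed

lemma continuous_on_energy_circle:
  assumes "M \<ge> 1" and "unitary2 a b c d" and "a \<noteq> 0" and "s\<^sup>2 = a * d - b * c"
  shows "continuous_on (sphere 0 1) (\<lambda>\<omega>. energy M a b c d (s * \<omega>))"
proof -
  have "continuous_on UNIV (\<lambda>\<omega>::complex. Re \<omega> / cmod a)"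
    using assms(3) by (intro continuous_intros) auto
  then have "continuous_on UNIV (\<lambda>\<omega>. energy_profile M (cmod a) (cmod b) (Re \<omega> / cmod a))"
    using assms(3) by (intro continuous_on_compose2[OF continuous_on_energy_profile]) auto
  then have "continuous_on (sphere 0 1) (\<lambda>\<omega>. energy_profile M (cmod a) (cmod b) (Re \<omega> / cmod a))"
    by (rule continuous_on_subset) simp
  then show ?thesis
    by (rule continuous_on_eq) (simp add: energy_on_circle[OF assms])
qed

theorem mainTheorem7:
  fixes M :: nat and a b c d s :: complex
  assumes "M \<ge> 1"
    and "unitary2 a b c d"
    and "a * b * c * d \<noteq> 0"
    and "s\<^sup>2 = a * d - b * c"
  shows "(\<forall>\<omega>. cmod \<omega> = 1 \<and> \<omega> \<notin> dB a \<longrightarrow>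
            (let x = xw a \<omega> in
             complex_of_real (energy M a b c d (s * \<omega>)) =
               1 / ((cmod a)\<^sup>2 + (cmod b)\<^sup>2 * (zetap M x)\<^sup>2) *
               (of_nat M * (cmod a)\<^sup>2 +
                (cmod b)\<^sup>2 / (4 * (x\<^sup>2 - 1)) *
                ((zetap (M + 1) x)\<^sup>2 - (zetap (M - 1) x)\<^sup>2 - 4 * of_nat M))))
       \<and> (\<forall>\<omega>. cmod \<omega> = 1 \<and> \<omega> \<in> dB a \<longrightarrow>
            energy M a b c d (s * \<omega>) =
              real M / 3 * ((3 * (cmod a)\<^sup>2 + (cmod b)\<^sup>2 + 2 * (cmod b)\<^sup>2 * (real M)\<^sup>2)
                            / ((cmod a)\<^sup>2 + (cmod b)\<^sup>2 * (real M)\<^sup>2))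
            \<and> continuous (at \<omega> within sphere 0 1) (\<lambda>w. energy M a b c d (s * w)))"
proof -
  have a: "a \<noteq> 0" using assms(3) by auto
  note energy = energy_on_circle[OF assms(1,2) a assms(4)]
  show ?thesis
  proof (intro conjI allI impI; elim conjE)
    fix \<omega> assume \<omega>: "cmod \<omega> = 1" "\<omega> \<notin> dB a"
    show "let x = xw a \<omega> in
             complex_of_real (energy M a b c d (s * \<omega>)) =
               1 / ((cmod a)\<^sup>2 + (cmod b)\<^sup>2 * (zetap M x)\<^sup>2) *
               (of_nat M * (cmod a)\<^sup>2 +
                (cmod b)\<^sup>2 / (4 * (x\<^sup>2 - 1)) *
                ((zetap (M + 1) x)\<^sup>2 - (zetap (M - 1) x)\<^sup>2 - 4 * of_nat M))"
      unfolding Let_def xw_on_circle[OF \<omega>(1) a] zetap_eq_zeta' zeta'_of_real energy[OF \<omega>(1)]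
        energy_profile_off_unit[OF assms(1) \<omega>(2)[unfolded dB_on_circle[OF \<omega>(1) a]]]
      by simp
  next
    fix \<omega> assume \<omega>: "cmod \<omega> = 1" "\<omega> \<in> dB a"
    show "energy M a b c d (s * \<omega>) =
              real M / 3 * ((3 * (cmod a)\<^sup>2 + (cmod b)\<^sup>2 + 2 * (cmod b)\<^sup>2 * (real M)\<^sup>2)
                            / ((cmod a)\<^sup>2 + (cmod b)\<^sup>2 * (real M)\<^sup>2))"
      unfolding energy[OF \<omega>(1)]
      using \<omega>(2) dB_on_circle[OF \<omega>(1) a] by (simp add: energy_profile_at_unit)
    show "continuous (at \<omega> within sphere 0 1) (\<lambda>w. energy M a b c d (s * w))"
      using continuous_on_energy_circle[OF assms(1,2) a assms(4)] \<omega>(1)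
      by (simp add: continuous_on_eq_continuous_within)
  qed
qed

end
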